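(* Let $\mathfrak{g} = \mathfrak{X}(S^1)\ltimes Lb$ and let $\widehat{\mathfrak{g}} = \mathfrak{g}\oplus\mathbb{R}$ be its central extension by the 2-cocycle $c = \lambda_1 c_1 + \lambda_2 c_2 + \lambda_3 c_3$ (notation as in the context), where $\lambda_1,\lambda_2,\lambda_3\in\mathbb{R}$ satisfy $\frac{\lambda_1}{4} + \lambda_2 - 2\lambda_3 = 0$. Fix $a\in\mathbb{R}$ and define the linear functional $(\eta,a)\in\widehat{\mathfrak{g}}^*$ by $$\left\langle(\eta, a),\left(g\partial, \begin{pmatrix} x & y\\ 0 & -x\end{pmatrix}, t\right)\right\rangle = \int_{S^1} y\, d\theta + a t .$$ Let $\mathfrak{g}_{(\eta,a)} = \{X\in\mathfrak{g} : \langle(\eta,a),[(Y,0),(X,0)]_{\widehat{\mathfrak{g}}}\rangle = 0 \text{ for all } Y\in\mathfrak{g}\}$ be the stabiliser of $(\eta,a)$ under the coadjoint action, and let $\mathfrak{h} = Lb$, viewed as the ideal $\{(0,b): b\in Lb\}$ of $\mathfrak{g}$. Then $\mathfrak{g} = \mathfrak{g}_{(\eta,a)}\oplus\mathfrak{h}$ as vector spaces, i.e. $\mathfrak{g}_{(\eta,a)}\cap\mathfrak{h} = \{0\}$ and $\mathfrak{g}_{(\eta,a)}+\mathfrak{h} = \mathfrak{g}$.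
   Context: All functions are smooth and $2\pi$-periodic in $\theta$; $'$ denotes $d/d\theta$. $\mathfrak{X}(S^1) = \{f\partial : f\in C^\infty(S^1)\}$ with bracket $[f\partial, g\partial] = (fg' - f'g)\partial$. $Lb$ is the Lie algebra of smooth maps $S^1\to\left\{\begin{pmatrix} x & y\\ 0 & -x\end{pmatrix} : x,y\in\mathbb{R}\right\}$ with pointwise matrix commutator. The Lie algebra $\mathfrak{g} = \mathfrak{X}(S^1)\ltimes Lb$ and its central extension $\widehat{\mathfrak{g}} = \mathfrak{X}(S^1)\ltimes Lb\oplus\mathbb{R}$ have bracket $$[(f\partial, b, \delta_1), (g\partial, d, \delta_2)] = \big([f\partial, g\partial],\ [d, b] + f d' - g b',\ c((f\partial, b), (g\partial, d))\big),$$ where for $b_i = \begin{pmatrix} x_i & y_i\\ 0 & -x_i\end{pmatrix}$ the cocycles are $c_1((f_1\partial,b_1),(f_2\partial,b_2)) = \int_{S^1} x_1 x_2'\,d\theta$, $c_2((f_1\partial,b_1),(f_2\partial,b_2)) = \int_{S^1}(f_1'' x_2 - f_2'' x_1)\,d\theta$, $c_3((f_1\partial,b_1),(f_2\partial,b_2)) = \int_{S^1}(f_1'' f_2' - f_1' f_2'')\,d\theta$. *)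

theory Defs
  imports "HOL-Analysis.Analysis"
begin

definition smooth_per :: "(real \<Rightarrow> real) \<Rightarrow> bool" where
  "smooth_per f \<longleftrightarrow> (\<forall>n x. ((deriv ^^ n) f) differentiable (at x)) \<and> (\<forall>t. f (t + 2*pi) = f t)"

text \<open>An element (f, x, y) of g stands for (f d/dtheta, matrix [[x, y], [0, -x]]).\<close>
type_synonym gel = "(real \<Rightarrow> real) \<times> (real \<Rightarrow> real) \<times> (real \<Rightarrow> real)"

definition gcar :: "gel set" where
  "gcar = {(f, x, y). smooth_per f \<and> smooth_per x \<and> smooth_per y}"

definition gzero :: gel where
  "gzero = ((\<lambda>_. 0), (\<lambda>_. 0), (\<lambda>_. 0))"

definition gadd :: "gel \<Rightarrow> gel \<Rightarrow> gel" where
  "gadd u v = (\<lambda>t. fst u t + fst v t, \<lambda>t. fst (snd u) t + fst (snd v) t,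
               \<lambda>t. snd (snd u) t + snd (snd v) t)"

definition hcar :: "gel set" where
  "hcar = {(f, x, y). (\<forall>t. f t = 0) \<and> smooth_per x \<and> smooth_per y}"

definition S1int :: "(real \<Rightarrow> real) \<Rightarrow> real" where
  "S1int f = integral {0..2*pi} f"

text \<open>Bracket of g: [(f1,b1),(f2,b2)] = ([f1,f2], [b2,b1] + f1 b2' - f2 b1').
  For b_i = [[x_i,y_i],[0,-x_i]], [b2,b1] = b2 b1 - b1 b2 = [[0, 2(x2 y1 - x1 y2)],[0,0]].\<close>
definition gbracket :: "gel \<Rightarrow> gel \<Rightarrow> gel" where
  "gbracket u v = (case u of (f1, x1, y1) \<Rightarrow> case v of (f2, x2, y2) \<Rightarrow>
     (\<lambda>t. f1 t * deriv f2 t - deriv f1 t * f2 t,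
      \<lambda>t. f1 t * deriv x2 t - f2 t * deriv x1 t,
      \<lambda>t. 2 * (x2 t * y1 t - x1 t * y2 t) + f1 t * deriv y2 t - f2 t * deriv y1 t))"

definition cocycle1 :: "gel \<Rightarrow> gel \<Rightarrow> real" where
  "cocycle1 u v = (case u of (f1, x1, y1) \<Rightarrow> case v of (f2, x2, y2) \<Rightarrow>
     S1int (\<lambda>t. x1 t * deriv x2 t))"

definition cocycle2 :: "gel \<Rightarrow> gel \<Rightarrow> real" where
  "cocycle2 u v = (case u of (f1, x1, y1) \<Rightarrow> case v of (f2, x2, y2) \<Rightarrow>
     S1int (\<lambda>t. deriv (deriv f1) t * x2 t - deriv (deriv f2) t * x1 t))"

definition cocycle3 :: "gel \<Rightarrow> gel \<Rightarrow> real" where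
  "cocycle3 u v = (case u of (f1, x1, y1) \<Rightarrow> case v of (f2, x2, y2) \<Rightarrow>
     S1int (\<lambda>t. deriv (deriv f1) t * deriv f2 t - deriv f1 t * deriv (deriv f2) t))"

definition cocycle :: "real \<Rightarrow> real \<Rightarrow> real \<Rightarrow> gel \<Rightarrow> gel \<Rightarrow> real" where
  "cocycle l1 l2 l3 u v = l1 * cocycle1 u v + l2 * cocycle2 u v + l3 * cocycle3 u v"

definition ghat_bracket :: "real \<Rightarrow> real \<Rightarrow> real \<Rightarrow> gel \<times> real \<Rightarrow> gel \<times> real \<Rightarrow> gel \<times> real" where
  "ghat_bracket l1 l2 l3 U V = (gbracket (fst U) (fst V), cocycle l1 l2 l3 (fst U) (fst V))"

definition eta_pair :: "real \<Rightarrow> gel \<times> real \<Rightarrow> real" where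
  "eta_pair a U = S1int (snd (snd (fst U))) + a * snd U"

definition stabiliser :: "real \<Rightarrow> real \<Rightarrow> real \<Rightarrow> real \<Rightarrow> gel set" where
  "stabiliser l1 l2 l3 a = {X \<in> gcar. \<forall>Y \<in> gcar.
      eta_pair a (ghat_bracket l1 l2 l3 (Y, 0) (X, 0)) = 0}"

end

theory Submission
  imports Defs "HOL-Library.Periodic_Fun"
begin

text \<open>
  Pairing an element (0, x, y) of \<open>\<h>\<close> with (0, 0, x) and with (0, y, 0) gives
  \<open>2 \<integral> x\<^sup>2\<close> and \<open>-2 \<integral> y\<^sup>2\<close>, so only 0 of \<open>\<h>\<close> stabilises (\<open>\<eta>\<close>, a).
  Conversely, for every vector field \<open>f \<partial>\<close> the element
  \<open>X\<^sub>f = (f, -f'/2, a (\<lambda>\<^sub>2/2 - 2\<lambda>\<^sub>3) f'')\<close> is in the stabiliser: its pairing with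
  any (g, u, v) is the integral over the circle of the derivative of a periodic function, plus
  a multiple of \<open>(\<lambda>\<^sub>1/4 + \<lambda>\<^sub>2 - 2\<lambda>\<^sub>3) \<integral> u f''\<close>, which the hypothesis kills.
  Hence \<open>(f, x, y) = X\<^sub>f + (0, x + f'/2, y - a (\<lambda>\<^sub>2/2 - 2\<lambda>\<^sub>3) f'')\<close>.
\<close>

lemma periodic_value_in_period:
  fixes h :: "real \<Rightarrow> 'a"
  assumes "\<And>t. h (t + p) = h t" and "p > 0"
  shows "\<exists>s\<in>{0..<p}. h t = h s"
proof
  interpret periodic_fun_simple h p
    by unfold_locales (fact assms(1))
  define s where "s = t - of_int \<lfloor>t / p\<rfloor> * p"
  show "h t = h s"
    unfolding s_def by (rule minus_of_int[symmetric])
  have "of_int \<lfloor>t / p\<rfloor> * p \<le> t" "t < (of_int \<lfloor>t / p\<rfloor> + 1) * p"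
    using floor_divide_lower floor_divide_upper assms(2) by blast+
  then show "s \<in> {0..<p}"
    unfolding s_def by (simp add: algebra_simps)
qed

lemma smooth_per_higher_differentiable: "smooth_per f \<Longrightarrow> (deriv ^^ n) f differentiable (at t)"
  unfolding smooth_per_def by blast

lemma smooth_per_has_derivative: "smooth_per f \<Longrightarrow> (f has_real_derivative deriv f t) (at t)"
  using smooth_per_higher_differentiable[of f 0] DERIV_deriv_iff_real_differentiable by simp

lemma smooth_per_continuous_on: "smooth_per f \<Longrightarrow> continuous_on S f"
  by (meson DERIV_isCont continuous_at_imp_continuous_on smooth_per_has_derivative)

lemma smooth_per_periodic: "smooth_per f \<Longrightarrow> f (t + 2*pi) = f t"
  unfolding smooth_per_def by blast

lemma smooth_per_const: "smooth_per (\<lambda>_. c)"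
proof -
  have "\<exists>k. (deriv ^^ n) (\<lambda>_::real. c) = (\<lambda>_. k)" for n
    by (induction n) auto
  then show ?thesis
    unfolding smooth_per_def by (metis differentiable_const)
qed

lemma smooth_per_deriv:
  assumes "smooth_per f"
  shows "smooth_per (deriv f)"
proof -
  have "(deriv ^^ n) (deriv f) = (deriv ^^ Suc n) f" for n
    by (metis funpow_Suc_right comp_apply)
  then have "(deriv ^^ n) (deriv f) differentiable (at t)" for n t
    using smooth_per_higher_differentiable[OF assms] by metis
  moreover have "deriv f (t + 2*pi) = deriv f t" for t
  proof -
    have "((\<lambda>s. f (s + 2*pi)) has_real_derivative deriv f (t + 2*pi)) (at t)"
      using DERIV_shift smooth_per_has_derivative[OF assms] by blast
    moreover have "(\<lambda>s. f (s + 2*pi)) = f"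
      using smooth_per_periodic[OF assms] by auto
    ultimately show ?thesis
      using DERIV_unique smooth_per_has_derivative[OF assms] by metis
  qed
  ultimately show ?thesis
    unfolding smooth_per_def by blast
qed

lemma higher_deriv_lincomb:
  fixes h g :: "real \<Rightarrow> real"
  assumes "\<And>n t. (deriv ^^ n) h differentiable (at t)" "\<And>n t. (deriv ^^ n) g differentiable (at t)"
  shows "(deriv ^^ n) (\<lambda>t. c * h t + g t) = (\<lambda>t. c * (deriv ^^ n) h t + (deriv ^^ n) g t)"
proof (induction n)
  case (Suc n)
  have "deriv (\<lambda>t. c * (deriv ^^ n) h t + (deriv ^^ n) g t) t
      = c * (deriv ^^ Suc n) h t + (deriv ^^ Suc n) g t" for t
    using assms[of n t] unfolding DERIV_deriv_iff_real_differentiable[symmetric]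
    by (auto intro!: DERIV_imp_deriv derivative_eq_intros)
  with Suc show ?case
    by auto
qed simp

lemma smooth_per_lincomb:
  assumes "smooth_per h" "smooth_per g"
  shows "smooth_per (\<lambda>t. c * h t + g t)"
  using assms higher_deriv_lincomb[of h g]
  unfolding smooth_per_def by (auto intro!: derivative_intros)

lemma smooth_per_add: "smooth_per h \<Longrightarrow> smooth_per g \<Longrightarrow> smooth_per (\<lambda>t. h t + g t)"
  using smooth_per_lincomb[of h g 1] by simp

lemma smooth_per_cmult: "smooth_per h \<Longrightarrow> smooth_per (\<lambda>t. c * h t)"
  using smooth_per_lincomb[OF _ smooth_per_const, of h c 0] by simp

lemma smooth_per_eq_0_if_eq_0_on_period:
  assumes "smooth_per x" "\<And>t. t \<in> {0..2*pi} \<Longrightarrow> x t = 0"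
  shows "x = (\<lambda>_. 0)"
proof
  fix t
  obtain s where "s \<in> {0..<2*pi}" "x t = x s"
    using periodic_value_in_period[of x "2*pi" t] smooth_per_periodic[OF assms(1)] by auto
  then show "x t = 0"
    using assms(2) by simp
qed

lemma S1int_derivative:
  assumes "\<And>t. (F has_real_derivative F' t) (at t)"
  shows "S1int F' = F (2*pi) - F 0"
  unfolding S1int_def
  by (intro integral_unique fundamental_theorem_of_calculus)
    (auto simp: has_real_derivative_iff_has_vector_derivative[symmetric]
      intro: DERIV_subset assms)

lemma smooth_per_eq_0_if_S1int_square_eq_0:
  assumes "smooth_per x" "S1int (\<lambda>t. x t * x t) = 0"
  shows "x = (\<lambda>_. 0)"
proof (rule smooth_per_eq_0_if_eq_0_on_period[OF assms(1)])
  fix t :: real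
  assume "t \<in> {0..2*pi}"
  moreover have "continuous_on (cbox 0 (2*pi)) (\<lambda>t. x t * x t)"
    using smooth_per_continuous_on[OF assms(1)] by (auto intro!: continuous_intros)
  ultimately show "x t = 0"
    using assms(2) integral_cbox_eq_0_iff[of 0 "2*pi" "\<lambda>t. x t * x t"] pi_gt_zero
    by (auto simp: S1int_def)
qed

lemma has_integral_S1int: "continuous_on {0..2*pi} h \<Longrightarrow> (h has_integral S1int h) {0..2*pi}"
  unfolding S1int_def using integrable_continuous_interval integrable_integral by blast

lemma deriv_cmult_of_smooth_per: "smooth_per h \<Longrightarrow> deriv (\<lambda>t. c * h t) = (\<lambda>t. c * deriv h t)"
  by (auto intro!: DERIV_imp_deriv derivative_eq_intros smooth_per_has_derivative)

lemma stabiliser_subset_gcar: "stabiliser l1 l2 l3 a \<subseteq> gcar"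
  unfolding stabiliser_def by blast

lemma hcar_subset_gcar: "hcar \<subseteq> gcar"
proof
  fix H assume "H \<in> hcar"
  then obtain f x y where H: "H = (f, x, y)" and "\<And>t. f t = 0"
    and "smooth_per x" "smooth_per y"
    by (auto simp: hcar_def)
  moreover from \<open>\<And>t. f t = 0\<close> have "f = (\<lambda>_. 0)"
    by auto
  ultimately show "H \<in> gcar"
    using smooth_per_const by (simp add: gcar_def)
qed

lemma gadd_mem_gcar: "u \<in> gcar \<Longrightarrow> v \<in> gcar \<Longrightarrow> gadd u v \<in> gcar"
  by (auto simp: gcar_def gadd_def intro!: smooth_per_add)

lemma eta_pair_ghat_bracket:
  "eta_pair a (ghat_bracket l1 l2 l3 ((g, u, v), 0) ((f, x, y), 0))
    = S1int (\<lambda>t. 2 * (x t * v t - u t * y t) + g t * deriv y t - f t * deriv v t)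
      + a * cocycle l1 l2 l3 (g, u, v) (f, x, y)"
  by (simp add: eta_pair_def ghat_bracket_def gbracket_def)

lemma stabiliser_inter_hcar: "stabiliser l1 l2 l3 a \<inter> hcar = {gzero}"
proof (intro equalityI subsetI)
  fix X assume X: "X \<in> stabiliser l1 l2 l3 a \<inter> hcar"
  then obtain f x y where X_eq: "X = (f, x, y)" and "\<And>t. f t = 0"
    and x: "smooth_per x" and y: "smooth_per y"
    by (auto simp: hcar_def)
  then have f: "f = (\<lambda>_. 0)"
    by auto
  have pairing: "eta_pair a (ghat_bracket l1 l2 l3 (Y, 0) (X, 0)) = 0" if "Y \<in> gcar" for Y
    using X that by (simp add: stabiliser_def)
  have "S1int (\<lambda>t. x t * x t) = 0"
    using pairing[of "(\<lambda>_. 0, \<lambda>_. 0, x)"] x smooth_per_const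
    by (simp add: X_eq f eta_pair_ghat_bracket gcar_def cocycle_def cocycle1_def cocycle2_def
        cocycle3_def S1int_def)
  then have x0: "x = (\<lambda>_. 0)"
    by (rule smooth_per_eq_0_if_S1int_square_eq_0[OF x])
  have "S1int (\<lambda>t. y t * y t) = 0"
    using pairing[of "(\<lambda>_. 0, y, \<lambda>_. 0)"] y smooth_per_const
    by (simp add: X_eq f x0 eta_pair_ghat_bracket gcar_def cocycle_def cocycle1_def cocycle2_def
        cocycle3_def S1int_def)
  then have y0: "y = (\<lambda>_. 0)"
    by (rule smooth_per_eq_0_if_S1int_square_eq_0[OF y])
  show "X \<in> {gzero}"
    by (simp add: X_eq f x0 y0 gzero_def)
next
  fix X assume "X \<in> {gzero}"
  then show "X \<in> stabiliser l1 l2 l3 a \<inter> hcar"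
    using smooth_per_const
    by (simp add: gzero_def hcar_def stabiliser_def gcar_def eta_pair_ghat_bracket cocycle_def
        cocycle1_def cocycle2_def cocycle3_def S1int_def)
qed

text \<open>
  Pairing with (0, 0, v) forces the x-component \<open>-f'/2\<close>; pairing with (0, u, 0) then
  forces the y-component \<open>-a (\<lambda>\<^sub>1/4 + \<lambda>\<^sub>2/2) f''\<close>, which is the one below under the hypothesis.
\<close>
definition stabiliser_lift :: "real \<Rightarrow> real \<Rightarrow> real \<Rightarrow> (real \<Rightarrow> real) \<Rightarrow> gel" where
  "stabiliser_lift l2 l3 a f =
    (f, \<lambda>t. -1/2 * deriv f t, \<lambda>t. a * (l2/2 - 2*l3) * deriv (deriv f) t)"

lemma stabiliser_lift_mem_gcar:
  assumes "smooth_per f"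
  shows "stabiliser_lift l2 l3 a f \<in> gcar"
  using assms smooth_per_cmult[OF smooth_per_deriv[OF assms], of "-1/2"]
    smooth_per_cmult[OF smooth_per_deriv[OF smooth_per_deriv[OF assms]], of "a * (l2/2 - 2*l3)"]
  by (simp add: stabiliser_lift_def gcar_def)

lemma eta_pair_bracket_stabiliser_lift:
  assumes f: "smooth_per f" and g: "smooth_per g" and u: "smooth_per u" and v: "smooth_per v"
  shows "eta_pair a (ghat_bracket l1 l2 l3 ((g, u, v), 0) (stabiliser_lift l2 l3 a f, 0))
    = S1int (\<lambda>t. - (deriv f t * v t + f t * deriv v t)
        + a * (l2/2 - 2*l3) * g t * deriv (deriv (deriv f)) t
        - a * l2/2 * deriv (deriv g) t * deriv f t
        + a * l3 * (deriv (deriv g) t * deriv f t - deriv g t * deriv (deriv f) t)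
        - 2 * a * (l1/4 + l2 - 2*l3) * u t * deriv (deriv f) t)"
    (is "_ = S1int ?integrand")
proof -
  define c where "c = a * (l2/2 - 2*l3)"
  define T where "T = (\<lambda>t. 2 * (-1/2 * deriv f t * v t - u t * (c * deriv (deriv f) t))
    + g t * (c * deriv (deriv (deriv f)) t) - f t * deriv v t)"
  define C1 where "C1 = (\<lambda>t. u t * (-1/2 * deriv (deriv f) t))"
  define C2 where "C2 = (\<lambda>t. deriv (deriv g) t * (-1/2 * deriv f t) - deriv (deriv f) t * u t)"
  define C3 where "C3 = (\<lambda>t. deriv (deriv g) t * deriv f t - deriv g t * deriv (deriv f) t)"
  have pairing: "eta_pair a (ghat_bracket l1 l2 l3 ((g, u, v), 0) (stabiliser_lift l2 l3 a f, 0))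
      = S1int T + a * (l1 * S1int C1 + l2 * S1int C2 + l3 * S1int C3)"
    using deriv_cmult_of_smooth_per[OF smooth_per_deriv[OF f], of "-1/2"]
      deriv_cmult_of_smooth_per[OF smooth_per_deriv[OF smooth_per_deriv[OF f]], of c]
    by (simp add: stabiliser_lift_def eta_pair_ghat_bracket cocycle_def
        cocycle1_def cocycle2_def cocycle3_def T_def C1_def C2_def C3_def c_def)
  have "continuous_on {0..2*pi} T" "continuous_on {0..2*pi} C1"
      "continuous_on {0..2*pi} C2" "continuous_on {0..2*pi} C3"
    unfolding T_def C1_def C2_def C3_def
    using assms smooth_per_deriv[OF f] smooth_per_deriv[OF smooth_per_deriv[OF f]]
      smooth_per_deriv[OF smooth_per_deriv[OF smooth_per_deriv[OF f]]]
      smooth_per_deriv[OF g] smooth_per_deriv[OF smooth_per_deriv[OF g]] smooth_per_deriv[OF v]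
    by (auto intro!: continuous_intros simp: smooth_per_continuous_on)
  then have has_integral: "((\<lambda>t. T t + a * (l1 * C1 t + l2 * C2 t + l3 * C3 t)) has_integral
      S1int T + a * (l1 * S1int C1 + l2 * S1int C2 + l3 * S1int C3)) {0..2*pi}"
    by (intro has_integral_add has_integral_mult_right has_integral_S1int)
  have integrand: "(\<lambda>t. T t + a * (l1 * C1 t + l2 * C2 t + l3 * C3 t)) = ?integrand"
    unfolding T_def C1_def C2_def C3_def c_def fun_eq_iff by (simp add: algebra_simps)
  have "S1int ?integrand = S1int T + a * (l1 * S1int C1 + l2 * S1int C2 + l3 * S1int C3)"
    unfolding S1int_def[of ?integrand] using has_integral[unfolded integrand] by (rule integral_unique)
  with pairing show ?thesis
    by simp
qed

lemma stabiliser_lift_mem: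
  assumes "l1/4 + l2 - 2*l3 = 0" and f: "smooth_per f"
  shows "stabiliser_lift l2 l3 a f \<in> stabiliser l1 l2 l3 a"
proof -
  have "eta_pair a (ghat_bracket l1 l2 l3 (Y, 0) (stabiliser_lift l2 l3 a f, 0)) = 0"
    if Y_mem: "Y \<in> gcar" for Y
  proof -
    obtain g u v where Y: "Y = (g, u, v)"
      and g: "smooth_per g" and u: "smooth_per u" and v: "smooth_per v"
      using Y_mem by (cases Y) (auto simp: gcar_def)
    define F where "F = (\<lambda>t. - f t * v t
      + a * (l2/2 * (g t * deriv (deriv f) t - deriv g t * deriv f t)
        + l3 * (deriv g t * deriv f t - 2 * g t * deriv (deriv f) t)))"
    have "eta_pair a (ghat_bracket l1 l2 l3 (Y, 0) (stabiliser_lift l2 l3 a f, 0)) = F (2*pi) - F 0"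
      unfolding Y eta_pair_bracket_stabiliser_lift[OF f g u v] assms(1)
      using f g v smooth_per_deriv[OF f] smooth_per_deriv[OF smooth_per_deriv[OF f]]
        smooth_per_deriv[OF g]
      by (intro S1int_derivative)
        (auto simp: F_def field_simps intro!: derivative_eq_intros smooth_per_has_derivative)
    also have "F (2*pi) = F 0"
    proof -
      have periodic: "h (2*pi) = h 0" if "smooth_per h" for h
        using smooth_per_periodic[OF that, of 0] by simp
      show ?thesis
        unfolding F_def using periodic[OF f] periodic[OF g] periodic[OF v]
          periodic[OF smooth_per_deriv[OF f]] periodic[OF smooth_per_deriv[OF smooth_per_deriv[OF f]]]
          periodic[OF smooth_per_deriv[OF g]] by simp
    qed
    finally show ?thesis
      by simp
  qed
  then show ?thesis
    using stabiliser_lift_mem_gcar[OF f] by (simp add: stabiliser_def)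
qed

lemma gadd_stabiliser_hcar_eq_gcar:
  assumes "l1/4 + l2 - 2*l3 = 0"
  shows "{gadd X H | X H. X \<in> stabiliser l1 l2 l3 a \<and> H \<in> hcar} = gcar"
proof (intro equalityI subsetI)
  fix Z assume "Z \<in> {gadd X H | X H. X \<in> stabiliser l1 l2 l3 a \<and> H \<in> hcar}"
  then show "Z \<in> gcar"
    using stabiliser_subset_gcar hcar_subset_gcar gadd_mem_gcar by blast
next
  fix Z assume "Z \<in> gcar"
  then obtain f x y where Z: "Z = (f, x, y)"
    and f: "smooth_per f" and x: "smooth_per x" and y: "smooth_per y"
    by (auto simp: gcar_def)
  define c where "c = a * (l2/2 - 2*l3)"
  define H where "H = (\<lambda>_::real. 0::real, \<lambda>t. 1/2 * deriv f t + x t, \<lambda>t. - c * deriv (deriv f) t + y t)"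
  have "H \<in> hcar"
    unfolding H_def hcar_def
    using smooth_per_lincomb[OF smooth_per_deriv[OF f] x, of "1/2"]
      smooth_per_lincomb[OF smooth_per_deriv[OF smooth_per_deriv[OF f]] y, of "-c"] by simp
  moreover have "Z = gadd (stabiliser_lift l2 l3 a f) H"
    by (simp add: Z H_def c_def gadd_def stabiliser_lift_def)
  ultimately show "Z \<in> {gadd X H | X H. X \<in> stabiliser l1 l2 l3 a \<and> H \<in> hcar}"
    using stabiliser_lift_mem[OF assms f] by blast
qed

theorem mainTheorem1:
  fixes l1 l2 l3 a :: real
  assumes "l1 / 4 + l2 - 2 * l3 = 0"
  shows "stabiliser l1 l2 l3 a \<inter> hcar = {gzero}
    \<and> {gadd X H | X H. X \<in> stabiliser l1 l2 l3 a \<and> H \<in> hcar} = gcar"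
  using stabiliser_inter_hcar gadd_stabiliser_hcar_eq_gcar[OF assms] by blast

end
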